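(* Consider a mean-variance team stochastic game as described in the context, and suppose the long-run average reward $\eta^{\boldsymbol{\mu}}$ takes the same value for all joint policies $\boldsymbol{\mu}\in\mathcal{U}$. Then Algorithm MV-MAPI (described in the context) converges to a Nash equilibrium $\tilde{\boldsymbol{\mu}}$, i.e. $J(\tilde{\boldsymbol{\mu}})\ge J(\mu_i,\tilde{\boldsymbol{\mu}}_{-i})$ for all $i\in\mathcal{N}$ and $\mu_i\in\mathcal{U}_i$.
   Context: Game: finite agents $\mathcal{N}=\{1,\dots,N\}$, finite state space $\mathcal{S}$, finite action sets $\mathcal{A}_i$, $\mathcal{A}=\prod_i\mathcal{A}_i$, transition kernel $P(s'|s,\boldsymbol{a})$, common reward $r:\mathcal{S}\times\mathcal{A}\to\mathbb{R}$. Policies $\mu_i:\mathcal{S}\to\Delta(\mathcal{A}_i)$ (set $\mathcal{U}_i$); joint policies $\boldsymbol{\mu}\in\mathcal{U}=\prod_i\mathcal{U}_i$ with $\boldsymbol{\mu}(\boldsymbol{a}|s)=\prod_i\mu_i(a_i|s)$; $(\mu_i,\boldsymbol{\mu}_{-i})$ means agent $i$ uses $\mu_i$, others use $\boldsymbol{\mu}_{-i}$. Standing assumption: the chain $P^{\boldsymbol{\mu}}(s'|s)=\sum_{\boldsymbol{a}}\boldsymbol{\mu}(\boldsymbol{a}|s)P(s'|s,\boldsymbol{a})$ is ergodic for every $\boldsymbol{\mu}\in\mathcal{U}$, stationary distribution $\pi^{\boldsymbol{\mu}}$. $\eta^{\boldsymbol{\mu}}=\sum_s\pi^{\boldsymbol{\mu}}(s)\sum_{\boldsymbol{a}}\boldsymbol{\mu}(\boldsymbol{a}|s)r(s,\boldsymbol{a})$;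 $\zeta^{\boldsymbol{\mu}}=\sum_s\pi^{\boldsymbol{\mu}}(s)\sum_{\boldsymbol{a}}\boldsymbol{\mu}(\boldsymbol{a}|s)(r(s,\boldsymbol{a})-\eta^{\boldsymbol{\mu}})^2$; for fixed $\beta\ge0$, $J(\boldsymbol{\mu})=\eta^{\boldsymbol{\mu}}-\beta\zeta^{\boldsymbol{\mu}}$. $f^{\boldsymbol{\mu}}(s,\boldsymbol{a})=r(s,\boldsymbol{a})-\beta(r(s,\boldsymbol{a})-\eta^{\boldsymbol{\mu}})^2$, $f^{\boldsymbol{\mu}}(s)=\sum_{\boldsymbol{a}}\boldsymbol{\mu}(\boldsymbol{a}|s)f^{\boldsymbol{\mu}}(s,\boldsymbol{a})$; $V_f^{\boldsymbol{\mu}}$ solves $V(s)=f^{\boldsymbol{\mu}}(s)-J(\boldsymbol{\mu})+\sum_{s'}P^{\boldsymbol{\mu}}(s'|s)V(s')$ (unique up to an additive constant); $Q_f^{\boldsymbol{\mu}}(s,\boldsymbol{a})=f^{\boldsymbol{\mu}}(s,\boldsymbol{a})-J(\boldsymbol{\mu})+\sum_{s'}P(s'|s,\boldsymbol{a})V_f^{\boldsymbol{\mu}}(s')$, $A_f^{\boldsymbol{\mu}}=Q_f^{\boldsymbol{\mu}}-V_f^{\boldsymbol{\mu}}$. Algorithm MV-MAPI: start with a deterministic joint policy $\boldsymbol{\mu}^{(0)}$. For $k=0,1,\dots$: set $\hat{\boldsymbol{\mu}}^{(k,0)}=\boldsymbol{\mu}^{(k)}$ and draw a random permutation $i_1,\dots,i_N$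 of the agents. For $h=1,\dots,N$: for every $s$, set $\mu^{(k+1)}_{i_h}(s)$ to be an action $a_{i_h}$ maximizing $\mathbb{E}_{\boldsymbol{a}_{-i_h}\sim\hat{\boldsymbol{\mu}}^{(k,h-1)}_{-i_h}(\cdot|s)}[A_f^{\hat{\boldsymbol{\mu}}^{(k,h-1)}}(s,a_{i_h},\boldsymbol{a}_{-i_h})]$, keeping $\mu^{(k+1)}_{i_h}(s)=\mu^{(k)}_{i_h}(s)$ whenever the latter attains the maximum; set $\hat{\boldsymbol{\mu}}^{(k,h)}=(\mu^{(k+1)}_{i_1},\dots,\mu^{(k+1)}_{i_h},\mu^{(k)}_{i_{h+1}},\dots,\mu^{(k)}_{i_N})$. If $\mu^{(k+1)}_i=\mu^{(k)}_i$ for all $i$, stop and return $\boldsymbol{\mu}^{(k)}$; otherwise set $\boldsymbol{\mu}^{(k+1)}=\hat{\boldsymbol{\mu}}^{(k,N)}$. *)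

theory Defs
  imports Complex_Main
begin

definition joint_actions :: "('i \<Rightarrow> 'a set) \<Rightarrow> ('i \<Rightarrow> 'a) set" where
  "joint_actions A = {a. \<forall>i. a i \<in> A i}"

definition policy_set :: "('i \<Rightarrow> 'a set) \<Rightarrow> 'i \<Rightarrow> ('s \<Rightarrow> 'a \<Rightarrow> real) set" where
  "policy_set A i = {p. \<forall>s. (\<forall>b. 0 \<le> p s b) \<and> (\<forall>b. b \<notin> A i \<longrightarrow> p s b = 0)
                              \<and> sum (p s) (A i) = 1}"

definition joint_policies :: "('i \<Rightarrow> 'a set) \<Rightarrow> ('i \<Rightarrow> 's \<Rightarrow> 'a \<Rightarrow> real) set" where
  "joint_policies A = {mu. \<forall>i. mu i \<in> policy_set A i}"

definition jprob :: "('i::finite \<Rightarrow> 's \<Rightarrow> 'a \<Rightarrow> real) \<Rightarrow> 's \<Rightarrow> ('i \<Rightarrow> 'a) \<Rightarrow> real" where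
  "jprob mu s a = (\<Prod>i\<in>UNIV. mu i s (a i))"

definition Pmu :: "('i::finite \<Rightarrow> 'a set) \<Rightarrow> ('s \<Rightarrow> ('i \<Rightarrow> 'a) \<Rightarrow> 's \<Rightarrow> real)
    \<Rightarrow> ('i \<Rightarrow> 's \<Rightarrow> 'a \<Rightarrow> real) \<Rightarrow> 's \<Rightarrow> 's \<Rightarrow> real" where
  "Pmu A P mu s s' = (\<Sum>a\<in>joint_actions A. jprob mu s a * P s a s')"

primrec mpow :: "('s::finite \<Rightarrow> 's \<Rightarrow> real) \<Rightarrow> nat \<Rightarrow> 's \<Rightarrow> 's \<Rightarrow> real" where
  "mpow M 0 s s' = (if s = s' then 1 else 0)"
| "mpow M (Suc n) s s' = (\<Sum>t\<in>UNIV. mpow M n s t * M t s')"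

text \<open>Ergodic finite Markov chain (irreducible and aperiodic), equivalently regular:
  some power of the transition matrix is entrywise positive.\<close>
definition ergodic :: "('s::finite \<Rightarrow> 's \<Rightarrow> real) \<Rightarrow> bool" where
  "ergodic M \<longleftrightarrow> (\<exists>n. \<forall>s s'. 0 < mpow M n s s')"

definition is_stationary :: "('s::finite \<Rightarrow> 's \<Rightarrow> real) \<Rightarrow> ('s \<Rightarrow> real) \<Rightarrow> bool" where
  "is_stationary M \<pi> \<longleftrightarrow> (\<forall>s. 0 \<le> \<pi> s) \<and> sum \<pi> UNIV = 1 \<and> (\<forall>s'. \<pi> s' = (\<Sum>s\<in>UNIV. \<pi> s * M s s'))"

definition stat_dist :: "('i::finite \<Rightarrow> 'a set) \<Rightarrow> ('s::finite \<Rightarrow> ('i \<Rightarrow> 'a) \<Rightarrow> 's \<Rightarrow> real)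
    \<Rightarrow> ('i \<Rightarrow> 's \<Rightarrow> 'a \<Rightarrow> real) \<Rightarrow> 's \<Rightarrow> real" where
  "stat_dist A P mu = (THE \<pi>. is_stationary (Pmu A P mu) \<pi>)"

definition eta :: "('i::finite \<Rightarrow> 'a set) \<Rightarrow> ('s::finite \<Rightarrow> ('i \<Rightarrow> 'a) \<Rightarrow> 's \<Rightarrow> real)
    \<Rightarrow> ('s \<Rightarrow> ('i \<Rightarrow> 'a) \<Rightarrow> real) \<Rightarrow> ('i \<Rightarrow> 's \<Rightarrow> 'a \<Rightarrow> real) \<Rightarrow> real" where
  "eta A P r mu = (\<Sum>s\<in>UNIV. stat_dist A P mu s * (\<Sum>a\<in>joint_actions A. jprob mu s a * r s a))"

definition zeta :: "('i::finite \<Rightarrow> 'a set) \<Rightarrow> ('s::finite \<Rightarrow> ('i \<Rightarrow> 'a) \<Rightarrow> 's \<Rightarrow> real)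
    \<Rightarrow> ('s \<Rightarrow> ('i \<Rightarrow> 'a) \<Rightarrow> real) \<Rightarrow> ('i \<Rightarrow> 's \<Rightarrow> 'a \<Rightarrow> real) \<Rightarrow> real" where
  "zeta A P r mu = (\<Sum>s\<in>UNIV. stat_dist A P mu s *
      (\<Sum>a\<in>joint_actions A. jprob mu s a * (r s a - eta A P r mu)\<^sup>2))"

definition Jmv :: "('i::finite \<Rightarrow> 'a set) \<Rightarrow> ('s::finite \<Rightarrow> ('i \<Rightarrow> 'a) \<Rightarrow> 's \<Rightarrow> real)
    \<Rightarrow> ('s \<Rightarrow> ('i \<Rightarrow> 'a) \<Rightarrow> real) \<Rightarrow> real \<Rightarrow> ('i \<Rightarrow> 's \<Rightarrow> 'a \<Rightarrow> real) \<Rightarrow> real" where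
  "Jmv A P r \<beta> mu = eta A P r mu - \<beta> * zeta A P r mu"

definition f_sa :: "('i::finite \<Rightarrow> 'a set) \<Rightarrow> ('s::finite \<Rightarrow> ('i \<Rightarrow> 'a) \<Rightarrow> 's \<Rightarrow> real)
    \<Rightarrow> ('s \<Rightarrow> ('i \<Rightarrow> 'a) \<Rightarrow> real) \<Rightarrow> real \<Rightarrow> ('i \<Rightarrow> 's \<Rightarrow> 'a \<Rightarrow> real) \<Rightarrow> 's \<Rightarrow> ('i \<Rightarrow> 'a) \<Rightarrow> real" where
  "f_sa A P r \<beta> mu s a = r s a - \<beta> * (r s a - eta A P r mu)\<^sup>2"

definition f_s :: "('i::finite \<Rightarrow> 'a set) \<Rightarrow> ('s::finite \<Rightarrow> ('i \<Rightarrow> 'a) \<Rightarrow> 's \<Rightarrow> real)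
    \<Rightarrow> ('s \<Rightarrow> ('i \<Rightarrow> 'a) \<Rightarrow> real) \<Rightarrow> real \<Rightarrow> ('i \<Rightarrow> 's \<Rightarrow> 'a \<Rightarrow> real) \<Rightarrow> 's \<Rightarrow> real" where
  "f_s A P r \<beta> mu s = (\<Sum>a\<in>joint_actions A. jprob mu s a * f_sa A P r \<beta> mu s a)"

text \<open>Poisson equation for V_f (solution unique up to an additive constant).\<close>
definition is_Vf :: "('i::finite \<Rightarrow> 'a set) \<Rightarrow> ('s::finite \<Rightarrow> ('i \<Rightarrow> 'a) \<Rightarrow> 's \<Rightarrow> real)
    \<Rightarrow> ('s \<Rightarrow> ('i \<Rightarrow> 'a) \<Rightarrow> real) \<Rightarrow> real \<Rightarrow> ('i \<Rightarrow> 's \<Rightarrow> 'a \<Rightarrow> real) \<Rightarrow> ('s \<Rightarrow> real) \<Rightarrow> bool" where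
  "is_Vf A P r \<beta> mu V \<longleftrightarrow>
     (\<forall>s. V s = f_s A P r \<beta> mu s - Jmv A P r \<beta> mu + (\<Sum>s'\<in>UNIV. Pmu A P mu s s' * V s'))"

definition Vf :: "('i::finite \<Rightarrow> 'a set) \<Rightarrow> ('s::finite \<Rightarrow> ('i \<Rightarrow> 'a) \<Rightarrow> 's \<Rightarrow> real)
    \<Rightarrow> ('s \<Rightarrow> ('i \<Rightarrow> 'a) \<Rightarrow> real) \<Rightarrow> real \<Rightarrow> ('i \<Rightarrow> 's \<Rightarrow> 'a \<Rightarrow> real) \<Rightarrow> 's \<Rightarrow> real" where
  "Vf A P r \<beta> mu = (SOME V. is_Vf A P r \<beta> mu V)"

definition Qf :: "('i::finite \<Rightarrow> 'a set) \<Rightarrow> ('s::finite \<Rightarrow> ('i \<Rightarrow> 'a) \<Rightarrow> 's \<Rightarrow> real)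
    \<Rightarrow> ('s \<Rightarrow> ('i \<Rightarrow> 'a) \<Rightarrow> real) \<Rightarrow> real \<Rightarrow> ('i \<Rightarrow> 's \<Rightarrow> 'a \<Rightarrow> real) \<Rightarrow> 's \<Rightarrow> ('i \<Rightarrow> 'a) \<Rightarrow> real" where
  "Qf A P r \<beta> mu s a = f_sa A P r \<beta> mu s a - Jmv A P r \<beta> mu + (\<Sum>s'\<in>UNIV. P s a s' * Vf A P r \<beta> mu s')"

definition Af :: "('i::finite \<Rightarrow> 'a set) \<Rightarrow> ('s::finite \<Rightarrow> ('i \<Rightarrow> 'a) \<Rightarrow> 's \<Rightarrow> real)
    \<Rightarrow> ('s \<Rightarrow> ('i \<Rightarrow> 'a) \<Rightarrow> real) \<Rightarrow> real \<Rightarrow> ('i \<Rightarrow> 's \<Rightarrow> 'a \<Rightarrow> real) \<Rightarrow> 's \<Rightarrow> ('i \<Rightarrow> 'a) \<Rightarrow> real" where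
  "Af A P r \<beta> mu s a = Qf A P r \<beta> mu s a - Vf A P r \<beta> mu s"

definition exp_adv :: "('i::finite \<Rightarrow> 'a set) \<Rightarrow> ('s::finite \<Rightarrow> ('i \<Rightarrow> 'a) \<Rightarrow> 's \<Rightarrow> real)
    \<Rightarrow> ('s \<Rightarrow> ('i \<Rightarrow> 'a) \<Rightarrow> real) \<Rightarrow> real \<Rightarrow> ('i \<Rightarrow> 's \<Rightarrow> 'a \<Rightarrow> real) \<Rightarrow> 'i \<Rightarrow> 's \<Rightarrow> 'a \<Rightarrow> real" where
  "exp_adv A P r \<beta> mu i s b =
     (\<Sum>a\<in>{a\<in>joint_actions A. a i = b}. (\<Prod>j\<in>UNIV - {i}. mu j s (a j)) * Af A P r \<beta> mu s a)"

definition det_pol :: "('i \<Rightarrow> 's \<Rightarrow> 'a) \<Rightarrow> 'i \<Rightarrow> 's \<Rightarrow> 'a \<Rightarrow> real" where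
  "det_pol d i s b = (if b = d i s then 1 else 0)"

definition is_perm :: "'i list \<Rightarrow> bool" where
  "is_perm ps \<longleftrightarrow> distinct ps \<and> set ps = UNIV"

text \<open>The h-th agent (0-indexed) is updated against the intermediate policy in
  which the first h agents of perm already use their new policies.\<close>
definition mapi_step :: "('i::finite \<Rightarrow> 'a set) \<Rightarrow> ('s::finite \<Rightarrow> ('i \<Rightarrow> 'a) \<Rightarrow> 's \<Rightarrow> real)
    \<Rightarrow> ('s \<Rightarrow> ('i \<Rightarrow> 'a) \<Rightarrow> real) \<Rightarrow> real \<Rightarrow> 'i list
    \<Rightarrow> ('i \<Rightarrow> 's \<Rightarrow> 'a) \<Rightarrow> ('i \<Rightarrow> 's \<Rightarrow> 'a) \<Rightarrow> bool" where
  "mapi_step A P r \<beta> perm d d' \<longleftrightarrow>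
     (\<forall>h<length perm. \<forall>s.
        let i = perm ! h;
            hat = det_pol (\<lambda>j. if j \<in> set (take h perm) then d' j else d j);
            g = exp_adv A P r \<beta> hat i s
        in d' i s \<in> A i
           \<and> (\<forall>b\<in>A i. g b \<le> g (d' i s))
           \<and> ((\<forall>b\<in>A i. g b \<le> g (d i s)) \<longrightarrow> d' i s = d i s))"

definition is_nash :: "('i::finite \<Rightarrow> 'a set) \<Rightarrow> ('s::finite \<Rightarrow> ('i \<Rightarrow> 'a) \<Rightarrow> 's \<Rightarrow> real)
    \<Rightarrow> ('s \<Rightarrow> ('i \<Rightarrow> 'a) \<Rightarrow> real) \<Rightarrow> real \<Rightarrow> ('i \<Rightarrow> 's \<Rightarrow> 'a \<Rightarrow> real) \<Rightarrow> bool" where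
  "is_nash A P r \<beta> mu \<longleftrightarrow>
     (\<forall>i. \<forall>p\<in>policy_set A i. Jmv A P r \<beta> (mu(i := p)) \<le> Jmv A P r \<beta> mu)"

end

theory Submission
  imports Defs "HOL-Analysis.Cartesian_Space"
begin

text \<open>Since \<open>\<eta>\<close> is the same for every policy, so is the one-step reward \<open>f\<close>; hence \<open>J\<close> is an
  ordinary long-run average reward and the performance-difference formula
  \<open>J(\<mu>') - J(\<mu>) = \<Sum>\<^sub>s \<pi>\<^sup>\<mu>\<^sup>'(s) \<Sum>\<^sub>a \<mu>'(a|s) A\<^sub>f\<^sup>\<mu>(s,a)\<close> holds. When a single agent
  changes its policy, the inner sum is that agent's expected advantage, which a greedy choice makes
  nonnegative, and positive in some state unless the choice is unchanged (ties keep the old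
  action). As the stationary distribution is everywhere positive, every agent update of MV-MAPI
  weakly increases \<open>J\<close> and every iteration that changes the policy strictly increases it. There
  are finitely many deterministic policies, so the iteration stops; at a fixed point no agent has a
  positive expected advantage anywhere, which by the same formula rules out profitable unilateral
  deviations.

  The needed Markov chain facts (stationary distribution, Poisson equation) follow from ergodicity
  via a maximum principle for harmonic vectors and the positivity of nonnegative left fixed
  vectors.\<close>

definition stochastic :: "('s::finite \<Rightarrow> 's \<Rightarrow> real) \<Rightarrow> bool" where
  "stochastic M \<longleftrightarrow> (\<forall>s t. 0 \<le> M s t) \<and> (\<forall>s. (\<Sum>t\<in>UNIV. M s t) = 1)"

definition left_fixed :: "('s::finite \<Rightarrow> 's \<Rightarrow> real) \<Rightarrow> ('s \<Rightarrow> real) \<Rightarrow> bool" where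
  "left_fixed M x \<longleftrightarrow> (\<forall>t. (\<Sum>s\<in>UNIV. x s * M s t) = x t)"

lemma left_fixedD: "left_fixed M x \<Longrightarrow> (\<Sum>s\<in>UNIV. x s * M s t) = x t"
  by (simp add: left_fixed_def)

lemma left_fixed_lincomb:
  assumes "left_fixed M x" and "left_fixed M y"
  shows "left_fixed M (\<lambda>s. a * x s + b * y s)"
  using assms
  by (simp add: left_fixed_def distrib_right sum.distrib mult.assoc sum_distrib_left[symmetric])

lemma stationary_left_fixed: "is_stationary M \<pi> \<Longrightarrow> left_fixed M \<pi>"
  unfolding is_stationary_def left_fixed_def by metis

lemma stationary_sum: "is_stationary M \<pi> \<Longrightarrow> (\<Sum>s\<in>UNIV. \<pi> s) = 1"
  unfolding is_stationary_def by blast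

lemma stationary_nonneg: "is_stationary M \<pi> \<Longrightarrow> 0 \<le> \<pi> s"
  unfolding is_stationary_def by blast

lemma sum_mult_sum_swap:
  fixes x :: "'s::finite \<Rightarrow> real" and y :: "'t::finite \<Rightarrow> real"
  shows "(\<Sum>s\<in>UNIV. x s * (\<Sum>t\<in>UNIV. M s t * y t)) = (\<Sum>t\<in>UNIV. (\<Sum>s\<in>UNIV. x s * M s t) * y t)"
proof -
  have "(\<Sum>s\<in>UNIV. x s * (\<Sum>t\<in>UNIV. M s t * y t)) = (\<Sum>s\<in>UNIV. \<Sum>t\<in>UNIV. x s * M s t * y t)"
    by (simp add: sum_distrib_left mult.assoc)
  also have "\<dots> = (\<Sum>t\<in>UNIV. (\<Sum>s\<in>UNIV. x s * M s t) * y t)"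
    by (subst sum.swap) (simp add: sum_distrib_right)
  finally show ?thesis .
qed

lemma sum_delta_mult: "(\<Sum>t\<in>UNIV. (if s = t then 1 else 0) * x t) = (x (s::'s::finite) :: real)"
  by (simp add: if_distrib if_distribR cong: if_cong)

lemma mpow_nonneg: "stochastic M \<Longrightarrow> 0 \<le> mpow M n s t"
  by (induction n arbitrary: t) (auto simp: stochastic_def intro!: sum_nonneg)

lemma mpow_row_sum: "stochastic M \<Longrightarrow> (\<Sum>t\<in>UNIV. mpow M n s t) = 1"
proof (induction n)
  case (Suc n)
  have "(\<Sum>t\<in>UNIV. mpow M (Suc n) s t) = (\<Sum>u\<in>UNIV. mpow M n s u * (\<Sum>t\<in>UNIV. M u t))"
    by (simp add: sum_distrib_left) (subst sum.swap, rule refl)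
  with Suc show ?case by (simp add: stochastic_def)
qed simp

lemma left_fixed_mpow: "left_fixed M x \<Longrightarrow> (\<Sum>s\<in>UNIV. x s * mpow M n s t) = x t"
proof (induction n arbitrary: t)
  case (Suc n)
  then show ?case by (simp add: sum_mult_sum_swap left_fixedD)
qed (simp add: if_distrib cong: if_cong)

lemma harmonic_mpow:
  "(\<And>s. (\<Sum>t\<in>UNIV. M s t * V t) = V s) \<Longrightarrow> (\<Sum>t\<in>UNIV. mpow M n s t * V t) = V s"
proof (induction n arbitrary: s)
  case (Suc n)
  have "(\<Sum>t\<in>UNIV. mpow M (Suc n) s t * V t) = (\<Sum>u\<in>UNIV. mpow M n s u * (\<Sum>t\<in>UNIV. M u t * V t))"
    by (simp only: mpow.simps sum_mult_sum_swap)
  with Suc show ?case by simp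
qed (simp add: sum_delta_mult)

lemma left_fixed_pos:
  assumes st: "stochastic M" and erg: "ergodic M" and y: "left_fixed M y"
    and nonneg: "\<And>s. 0 \<le> y s" and nonzero: "y s0 \<noteq> 0"
  shows "0 < y s"
proof -
  obtain n where pos: "\<And>s t. 0 < mpow M n s t" using erg by (auto simp: ergodic_def)
  have "0 < y s0 * mpow M n s0 s"
    using nonneg[of s0] nonzero pos[of s0 s] by simp
  also have "\<dots> \<le> (\<Sum>u\<in>UNIV. y u * mpow M n u s)"
    by (rule member_le_sum) (auto intro!: mult_nonneg_nonneg nonneg mpow_nonneg st)
  also have "\<dots> = y s" by (rule left_fixed_mpow[OF y])
  finally show ?thesis .
qed

lemma harmonic_const:
  assumes st: "stochastic M" and erg: "ergodic M" and harm: "\<And>s. (\<Sum>t\<in>UNIV. M s t * V t) = V s"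
  shows "V s = V t"
proof -
  obtain n where pos: "\<And>s t. 0 < mpow M n s t" using erg by (auto simp: ergodic_def)
  have "Max (range V) \<in> range V" by (rule Max_in) auto
  then obtain s0 where "V s0 = Max (range V)" by (metis rangeE)
  then have max: "V u \<le> V s0" for u by simp
  have "(\<Sum>u\<in>UNIV. mpow M n s0 u * (V s0 - V u))
      = (\<Sum>u\<in>UNIV. mpow M n s0 u) * V s0 - (\<Sum>u\<in>UNIV. mpow M n s0 u * V u)"
    by (simp add: right_diff_distrib sum_subtractf sum_distrib_right)
  also have "\<dots> = 0"
    by (simp only: harmonic_mpow[OF harm] mpow_row_sum[OF st])
  finally have zero: "\<forall>u\<in>UNIV. mpow M n s0 u * (V s0 - V u) = 0"
    using max mpow_nonneg[OF st] by (simp add: sum_nonneg_eq_0_iff)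
  have "V u = V s0" for u using zero[rule_format, of u] pos[of s0 u] by simp
  then show ?thesis by metis
qed

lemma left_fixed_abs:
  assumes st: "stochastic M" and x: "left_fixed M x"
  shows "left_fixed M (\<lambda>s. \<bar>x s\<bar>)"
proof -
  have le: "\<bar>x t\<bar> \<le> (\<Sum>s\<in>UNIV. \<bar>x s\<bar> * M s t)" for t
  proof -
    have "\<bar>x t\<bar> = \<bar>\<Sum>s\<in>UNIV. x s * M s t\<bar>" using left_fixedD[OF x] by simp
    also have "\<dots> \<le> (\<Sum>s\<in>UNIV. \<bar>x s\<bar> * M s t)"
      using sum_abs[of "\<lambda>s. x s * M s t" UNIV] st by (simp add: abs_mult stochastic_def)
    finally show ?thesis .
  qed
  have "(\<Sum>t\<in>UNIV. \<Sum>s\<in>UNIV. \<bar>x s\<bar> * M s t) = (\<Sum>t\<in>UNIV. \<bar>x t\<bar>)"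
    using st by (subst sum.swap) (simp add: stochastic_def flip: sum_distrib_left)
  then have "\<forall>t\<in>UNIV. (\<Sum>s\<in>UNIV. \<bar>x s\<bar> * M s t) - \<bar>x t\<bar> = 0"
    using le by (subst sum_nonneg_eq_0_iff[symmetric]) (auto simp: sum_subtractf)
  then show ?thesis by (simp add: left_fixed_def)
qed

text \<open>The positive part of the difference of two stationary distributions is left fixed,
  hence either zero or everywhere positive; the latter contradicts equal total mass.\<close>
lemma stationary_le:
  assumes st: "stochastic M" and erg: "ergodic M"
    and \<pi>: "is_stationary M \<pi>" and \<sigma>: "is_stationary M \<sigma>"
  shows "\<pi> s \<le> \<sigma> s"
proof (rule ccontr)
  define x where "x s = \<pi> s - \<sigma> s" for s
  define y where "y s = (\<bar>x s\<bar> + x s) / 2" for s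
  have x: "left_fixed M x"
    using left_fixed_lincomb[OF stationary_left_fixed[OF \<pi>] stationary_left_fixed[OF \<sigma>], of 1 "-1"]
    by (simp add: x_def[abs_def])
  have y: "left_fixed M y"
    using left_fixed_lincomb[OF left_fixed_abs[OF st x] x, of "1/2" "1/2"]
    by (simp add: y_def[abs_def] add_divide_distrib)
  assume "\<not> \<pi> s \<le> \<sigma> s"
  then have "y s \<noteq> 0" by (simp add: y_def x_def)
  moreover have "0 \<le> y u" for u by (simp add: y_def)
  ultimately have y_pos: "0 < y u" for u using left_fixed_pos[OF st erg y] by blast
  have "\<sigma> u < \<pi> u" for u
    using y_pos[of u] unfolding y_def x_def by (simp add: abs_if split: if_splits)
  then have "(\<Sum>u\<in>UNIV. \<sigma> u) < (\<Sum>u\<in>UNIV. \<pi> u)" by (simp add: sum_strict_mono)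
  with stationary_sum[OF \<pi>] stationary_sum[OF \<sigma>] show False by simp
qed

lemma stationary_unique:
  assumes st: "stochastic M" and erg: "ergodic M"
    and \<pi>: "is_stationary M \<pi>" and \<sigma>: "is_stationary M \<sigma>"
  shows "\<pi> = \<sigma>"
  using stationary_le[OF st erg \<pi> \<sigma>] stationary_le[OF st erg \<sigma> \<pi>] by (simp add: fun_eq_iff antisym)

lemma stationary_pos:
  assumes st: "stochastic M" and erg: "ergodic M" and \<pi>: "is_stationary M \<pi>"
  shows "0 < \<pi> s"
proof -
  obtain s0 where "\<pi> s0 \<noteq> 0" using stationary_sum[OF \<pi>] by force
  then show ?thesis
    using left_fixed_pos[OF st erg stationary_left_fixed[OF \<pi>] stationary_nonneg[OF \<pi>]] by blast
qed

lemma linear_system_solvable_if_injective: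
  fixes T :: "'s::finite \<Rightarrow> 's \<Rightarrow> real"
  assumes inj: "\<And>x. (\<And>s. (\<Sum>t\<in>UNIV. T s t * x t) = 0) \<Longrightarrow> x = (\<lambda>_. 0)"
  shows "\<exists>x. \<forall>s. (\<Sum>t\<in>UNIV. T s t * x t) = c s"
proof -
  define T' :: "real^'s^'s" where "T' = (\<chi> s t. T s t)"
  have apply_T': "T' *v x = (\<chi> s. \<Sum>t\<in>UNIV. T s t * x $ t)" for x
    by (simp add: T'_def matrix_vector_mult_def)
  have "inj ((*v) T')"
  proof (rule injI)
    fix x y assume "T' *v x = T' *v y"
    then have "(\<Sum>t\<in>UNIV. T s t * (x - y) $ t) = 0" for s
      by (simp add: apply_T' vec_eq_iff right_diff_distrib sum_subtractf)
    then have "(\<lambda>t. (x - y) $ t) = (\<lambda>_. 0)" by (rule inj)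
    then show "x = y" by (simp add: vec_eq_iff fun_eq_iff)
  qed
  then have "surj ((*v) T')"
    by (simp add: linear_injective_imp_surjective matrix_vector_mul_linear)
  then obtain v where "T' *v v = (\<chi> s. c s)" by (metis surjD)
  then show ?thesis by (auto simp: apply_T' vec_eq_iff)
qed

text \<open>A nonzero left fixed vector exists because otherwise \<open>x \<mapsto> x - x M\<close> would be
  onto, yet every vector in its range has total mass zero.\<close>
lemma stationary_exists:
  fixes M :: "'s::finite \<Rightarrow> 's \<Rightarrow> real"
  assumes st: "stochastic M" and erg: "ergodic M"
  shows "\<exists>\<pi>. is_stationary M \<pi>"
proof -
  define T where "T s t = (if s = t then 1 else 0) - M t s" for s t
  have apply_T: "(\<Sum>t\<in>UNIV. T s t * x t) = x s - (\<Sum>t\<in>UNIV. x t * M t s)" for s x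
    by (simp only: T_def left_diff_distrib sum_subtractf sum_delta_mult mult.commute[of "M _ _"])
  have mass_zero: "(\<Sum>s\<in>UNIV. \<Sum>t\<in>UNIV. T s t * x t) = 0" for x
  proof -
    have "(\<Sum>s\<in>UNIV. \<Sum>t\<in>UNIV. x t * M t s) = (\<Sum>t\<in>UNIV. x t * (\<Sum>s\<in>UNIV. M t s))"
      by (subst sum.swap) (simp add: sum_distrib_left)
    with st show ?thesis by (simp add: apply_T sum_subtractf stochastic_def)
  qed
  obtain x where x_fixed: "left_fixed M x" and "x \<noteq> (\<lambda>_. 0)"
  proof -
    have "\<not> (\<forall>s. (\<Sum>t\<in>UNIV. T s t * x t) = 1)" for x
    proof
      assume "\<forall>s. (\<Sum>t\<in>UNIV. T s t * x t) = 1"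
      then have "(\<Sum>s\<in>UNIV. \<Sum>t\<in>UNIV. T s t * x t) = real CARD('s)" by simp
      with mass_zero[of x] show False by simp
    qed
    then obtain x where x: "\<And>s. (\<Sum>t\<in>UNIV. T s t * x t) = 0" and "x \<noteq> (\<lambda>_. 0)"
      using linear_system_solvable_if_injective[of T "\<lambda>_. 1"] by blast
    moreover have "left_fixed M x"
      unfolding left_fixed_def using x by (simp only: apply_T) (metis eq_iff_diff_eq_0)
    ultimately show thesis using that by blast
  qed
  then obtain s0 where "\<bar>x s0\<bar> \<noteq> 0" by auto
  then have pos: "0 < \<bar>x s\<bar>" for s
    by (rule left_fixed_pos[OF st erg left_fixed_abs[OF st x_fixed], rotated]) simp
  define Z where "Z = (\<Sum>s\<in>UNIV. \<bar>x s\<bar>)"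
  have "0 < Z" unfolding Z_def using pos by (simp add: sum_pos)
  have "left_fixed M (\<lambda>s. \<bar>x s\<bar> / Z)"
    using left_fixed_lincomb[OF left_fixed_abs[OF st x_fixed] x_fixed, of "1 / Z" 0] by simp
  moreover have "(\<Sum>s\<in>UNIV. \<bar>x s\<bar> / Z) = 1"
    using \<open>0 < Z\<close> by (simp add: Z_def flip: sum_divide_distrib)
  ultimately have "is_stationary M (\<lambda>s. \<bar>x s\<bar> / Z)"
    using \<open>0 < Z\<close> by (simp add: is_stationary_def left_fixed_def)
  then show ?thesis by blast
qed

lemma stationary_The:
  "stochastic M \<Longrightarrow> ergodic M \<Longrightarrow> is_stationary M (THE \<pi>. is_stationary M \<pi>)"
  by (metis stationary_exists stationary_unique theI)

text \<open>The Poisson equation is solved through the nonsingular system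
  \<open>(I - M + \<one> \<pi>) V = c\<close>; its kernel is trivial since harmonic vectors are constant.\<close>
lemma poisson_solvable:
  fixes M :: "'s::finite \<Rightarrow> 's \<Rightarrow> real"
  assumes st: "stochastic M" and erg: "ergodic M" and \<pi>: "is_stationary M \<pi>"
    and centered: "(\<Sum>s\<in>UNIV. \<pi> s * c s) = 0"
  shows "\<exists>V. \<forall>s. V s = c s + (\<Sum>t\<in>UNIV. M s t * V t)"
proof -
  define T where "T s t = (if s = t then 1 else 0) - M s t + \<pi> t" for s t
  have apply_T: "(\<Sum>t\<in>UNIV. T s t * x t)
      = x s - (\<Sum>t\<in>UNIV. M s t * x t) + (\<Sum>t\<in>UNIV. \<pi> t * x t)" for s x
    by (simp only: T_def distrib_right left_diff_distrib sum.distrib sum_subtractf sum_delta_mult)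
  have \<pi>_T: "(\<Sum>s\<in>UNIV. \<pi> s * (\<Sum>t\<in>UNIV. T s t * x t)) = (\<Sum>t\<in>UNIV. \<pi> t * x t)" for x
  proof -
    have "(\<Sum>s\<in>UNIV. \<pi> s * (\<Sum>t\<in>UNIV. M s t * x t)) = (\<Sum>t\<in>UNIV. \<pi> t * x t)"
      by (simp add: sum_mult_sum_swap left_fixedD[OF stationary_left_fixed[OF \<pi>]])
    then show ?thesis
      by (simp add: apply_T distrib_left right_diff_distrib sum.distrib sum_subtractf
          stationary_sum[OF \<pi>] flip: sum_distrib_right)
  qed
  have "\<exists>V. \<forall>s. (\<Sum>t\<in>UNIV. T s t * V t) = c s"
  proof (rule linear_system_solvable_if_injective)
    fix x assume x: "\<And>s. (\<Sum>t\<in>UNIV. T s t * x t) = 0"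
    have mass: "(\<Sum>t\<in>UNIV. \<pi> t * x t) = 0" using \<pi>_T[of x] by (simp add: x)
    then have "(\<Sum>t\<in>UNIV. M s t * x t) = x s" for s using x[of s] unfolding apply_T by linarith
    then have const: "x t = x s" for s t by (rule harmonic_const[OF st erg])
    have "x s = 0" for s
    proof -
      have "(\<Sum>t\<in>UNIV. \<pi> t * x t) = (\<Sum>t\<in>UNIV. \<pi> t * x s)"
        by (rule sum.cong[OF refl]) (metis const)
      also have "\<dots> = x s" by (simp add: stationary_sum[OF \<pi>] flip: sum_distrib_right)
      finally show ?thesis using mass by simp
    qed
    then show "x = (\<lambda>_. 0)" by auto
  qed
  then obtain V where V: "\<And>s. (\<Sum>t\<in>UNIV. T s t * V t) = c s" by blast
  have "(\<Sum>t\<in>UNIV. \<pi> t * V t) = 0" using \<pi>_T[of V] by (simp add: V centered)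
  then have "V s = c s + (\<Sum>t\<in>UNIV. M s t * V t)" for s using V[of s] unfolding apply_T by linarith
  then show ?thesis by blast
qed

definition sequential_update :: "'i list \<Rightarrow> nat \<Rightarrow> ('i \<Rightarrow> 'x) \<Rightarrow> ('i \<Rightarrow> 'x) \<Rightarrow> 'i \<Rightarrow> 'x" where
  "sequential_update perm h d d' = (\<lambda>j. if j \<in> set (take h perm) then d' j else d j)"

lemma sequential_update_Suc:
  "h < length perm \<Longrightarrow>
    sequential_update perm (Suc h) d d' = (sequential_update perm h d d')(perm ! h := d' (perm ! h))"
  by (auto simp: sequential_update_def take_Suc_conv_app_nth fun_eq_iff)

lemma sequential_update_nth:
  "distinct perm \<Longrightarrow> h < length perm \<Longrightarrow> sequential_update perm h d d' (perm ! h) = d (perm ! h)"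
  by (auto simp: sequential_update_def in_set_conv_nth nth_eq_iff_index_eq)

lemma ex_fixed_step_if_strictly_improving:
  fixes d :: "nat \<Rightarrow> 'x" and f :: "'x \<Rightarrow> 'b::linorder"
  assumes "finite (range d)" and "\<And>k. d (Suc k) \<noteq> d k \<Longrightarrow> f (d k) < f (d (Suc k))"
  shows "\<exists>k. d (Suc k) = d k"
proof (rule ccontr)
  assume "\<nexists>k. d (Suc k) = d k"
  then have "strict_mono (f \<circ> d)" by (simp add: strict_mono_Suc_iff assms(2))
  then have "inj d" by (metis strict_mono_imp_inj_on inj_on_imageI2)
  with assms(1) show False by (simp add: finite_image_iff)
qed

locale mv_team_game =
  fixes A :: "'i::finite \<Rightarrow> 'a set"
    and P :: "'s::finite \<Rightarrow> ('i \<Rightarrow> 'a) \<Rightarrow> 's \<Rightarrow> real"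
    and r :: "'s \<Rightarrow> ('i \<Rightarrow> 'a) \<Rightarrow> real"
    and \<beta> :: real
  assumes finite_actions: "\<And>i. finite (A i)"
    and P_nonneg: "\<And>s a s'. a \<in> joint_actions A \<Longrightarrow> 0 \<le> P s a s'"
    and P_sum: "\<And>s a. a \<in> joint_actions A \<Longrightarrow> (\<Sum>s'\<in>UNIV. P s a s') = 1"
    and ergodic_Pmu: "\<And>mu. mu \<in> joint_policies A \<Longrightarrow> ergodic (Pmu A P mu)"
    and eta_const: "\<And>mu mu'. mu \<in> joint_policies A \<Longrightarrow> mu' \<in> joint_policies A \<Longrightarrow>
                      eta A P r mu = eta A P r mu'"
begin

abbreviation J :: "('i \<Rightarrow> 's \<Rightarrow> 'a \<Rightarrow> real) \<Rightarrow> real" where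
  "J \<equiv> Jmv A P r \<beta>"

abbreviation stat :: "('i \<Rightarrow> 's \<Rightarrow> 'a \<Rightarrow> real) \<Rightarrow> 's \<Rightarrow> real" where
  "stat \<equiv> stat_dist A P"

abbreviation adv :: "('i \<Rightarrow> 's \<Rightarrow> 'a \<Rightarrow> real) \<Rightarrow> 'i \<Rightarrow> 's \<Rightarrow> 'a \<Rightarrow> real" where
  "adv \<equiv> exp_adv A P r \<beta>"

lemma joint_actions_PiE: "joint_actions A = PiE UNIV A"
  by (auto simp: joint_actions_def PiE_def Pi_def extensional_def)

lemma finite_joint_actions: "finite (joint_actions A)"
  unfolding joint_actions_PiE by (rule finite_PiE) (auto simp: finite_actions)

lemma finite_deterministic_policies: "finite {d :: 'i \<Rightarrow> 's \<Rightarrow> 'a. \<forall>i s. d i s \<in> A i}"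
proof -
  have "{d :: 'i \<Rightarrow> 's \<Rightarrow> 'a. \<forall>i s. d i s \<in> A i} = PiE UNIV (\<lambda>i. PiE UNIV (\<lambda>_. A i))"
    by (auto simp: PiE_def Pi_def extensional_def)
  then show ?thesis by (simp add: finite_PiE finite_actions)
qed

lemma jprob_nonneg: "mu \<in> joint_policies A \<Longrightarrow> 0 \<le> jprob mu s a"
  unfolding jprob_def by (intro prod_nonneg) (auto simp: joint_policies_def policy_set_def)

lemma sum_jprob: "mu \<in> joint_policies A \<Longrightarrow> (\<Sum>a\<in>joint_actions A. jprob mu s a) = 1"
proof -
  assume mu: "mu \<in> joint_policies A"
  have "(\<Sum>a\<in>joint_actions A. jprob mu s a) = (\<Prod>i\<in>UNIV. \<Sum>b\<in>A i. mu i s b)"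
    unfolding joint_actions_PiE jprob_def by (rule prod_sum_PiE[symmetric]) (auto simp: finite_actions)
  also have "\<dots> = 1" using mu by (simp add: joint_policies_def policy_set_def)
  finally show ?thesis .
qed

lemma stochastic_Pmu: "mu \<in> joint_policies A \<Longrightarrow> stochastic (Pmu A P mu)"
proof -
  assume mu: "mu \<in> joint_policies A"
  have "0 \<le> Pmu A P mu s t" for s t
    unfolding Pmu_def by (intro sum_nonneg mult_nonneg_nonneg jprob_nonneg[OF mu] P_nonneg)
  moreover have "(\<Sum>t\<in>UNIV. Pmu A P mu s t) = 1" for s
  proof -
    have "(\<Sum>t\<in>UNIV. Pmu A P mu s t) = (\<Sum>a\<in>joint_actions A. jprob mu s a * (\<Sum>t\<in>UNIV. P s a t))"
      unfolding Pmu_def by (subst sum.swap) (simp add: sum_distrib_left)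
    also have "\<dots> = 1" by (simp add: P_sum sum_jprob[OF mu])
    finally show ?thesis .
  qed
  ultimately show ?thesis by (simp add: stochastic_def)
qed

lemma stationary_stat: "mu \<in> joint_policies A \<Longrightarrow> is_stationary (Pmu A P mu) (stat mu)"
  unfolding stat_dist_def by (rule stationary_The[OF stochastic_Pmu ergodic_Pmu])

lemma stat_pos: "mu \<in> joint_policies A \<Longrightarrow> 0 < stat mu s"
  by (rule stationary_pos[OF stochastic_Pmu ergodic_Pmu stationary_stat])

lemma J_eq_expected_f: "J mu = (\<Sum>s\<in>UNIV. stat mu s * f_s A P r \<beta> mu s)"
proof -
  let ?\<eta> = "eta A P r mu"
  have "(\<Sum>s\<in>UNIV. stat mu s * f_s A P r \<beta> mu s) =
     (\<Sum>s\<in>UNIV. stat mu s * (\<Sum>a\<in>joint_actions A. jprob mu s a * r s a)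
       - \<beta> * (stat mu s * (\<Sum>a\<in>joint_actions A. jprob mu s a * (r s a - ?\<eta>)\<^sup>2)))"
    unfolding f_s_def f_sa_def
    by (rule sum.cong) (simp_all add: right_diff_distrib sum_subtractf sum_distrib_left mult.left_commute)
  also have "\<dots> = ?\<eta> - \<beta> * zeta A P r mu"
    unfolding eta_def zeta_def by (simp add: sum_subtractf sum_distrib_left)
  finally show ?thesis by (simp add: Jmv_def)
qed

lemma is_Vf_Vf: "mu \<in> joint_policies A \<Longrightarrow> is_Vf A P r \<beta> mu (Vf A P r \<beta> mu)"
proof -
  assume mu: "mu \<in> joint_policies A"
  have "(\<Sum>s\<in>UNIV. stat mu s * (f_s A P r \<beta> mu s - J mu)) = 0"
    using J_eq_expected_f[of mu] stationary_sum[OF stationary_stat[OF mu]]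
    by (simp add: right_diff_distrib sum_subtractf flip: sum_distrib_right)
  then obtain V where "\<forall>s. V s = (f_s A P r \<beta> mu s - J mu) + (\<Sum>t\<in>UNIV. Pmu A P mu s t * V t)"
    using poisson_solvable[OF stochastic_Pmu[OF mu] ergodic_Pmu[OF mu] stationary_stat[OF mu],
        where c = "\<lambda>s. f_s A P r \<beta> mu s - J mu"] by blast
  then have "is_Vf A P r \<beta> mu V" unfolding is_Vf_def by blast
  then show ?thesis unfolding Vf_def by (rule someI[where P = "is_Vf A P r \<beta> mu"])
qed

text \<open>This is the only place where the constancy of \<open>\<eta>\<close> enters: it makes the one-step
  reward \<open>f\<close> independent of the policy, so that \<open>J\<close> is an ordinary average reward.\<close>
lemma f_sa_policy_independent:
  "mu \<in> joint_policies A \<Longrightarrow> mu' \<in> joint_policies A \<Longrightarrow> f_sa A P r \<beta> mu = f_sa A P r \<beta> mu'"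
  using eta_const[of mu mu'] by (simp add: f_sa_def[abs_def])

lemma expected_Af:
  assumes mu: "mu \<in> joint_policies A" and mu': "mu' \<in> joint_policies A"
  shows "(\<Sum>a\<in>joint_actions A. jprob mu' s a * Af A P r \<beta> mu s a) =
    f_s A P r \<beta> mu' s - J mu + (\<Sum>t\<in>UNIV. Pmu A P mu' s t * Vf A P r \<beta> mu t) - Vf A P r \<beta> mu s"
proof -
  let ?V = "Vf A P r \<beta> mu"
  have next_V: "(\<Sum>a\<in>joint_actions A. jprob mu' s a * (\<Sum>t\<in>UNIV. P s a t * ?V t)) =
      (\<Sum>t\<in>UNIV. Pmu A P mu' s t * ?V t)"
    unfolding Pmu_def sum_distrib_left sum_distrib_right mult.assoc by (rule sum.swap)
  have "(\<Sum>a\<in>joint_actions A. jprob mu' s a * Af A P r \<beta> mu s a) =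
     (\<Sum>a\<in>joint_actions A. jprob mu' s a * f_sa A P r \<beta> mu' s a
        + jprob mu' s a * (\<Sum>t\<in>UNIV. P s a t * ?V t) - jprob mu' s a * (J mu + ?V s))"
    unfolding Af_def Qf_def f_sa_policy_independent[OF mu mu'] by (simp add: algebra_simps)
  also have "\<dots> = f_s A P r \<beta> mu' s + (\<Sum>t\<in>UNIV. Pmu A P mu' s t * ?V t) - (J mu + ?V s)"
    by (simp add: sum.distrib sum_subtractf f_s_def next_V sum_jprob[OF mu'] flip: sum_distrib_right)
  finally show ?thesis by simp
qed

lemma expected_Af_self:
  "mu \<in> joint_policies A \<Longrightarrow> (\<Sum>a\<in>joint_actions A. jprob mu s a * Af A P r \<beta> mu s a) = 0"
  using expected_Af[of mu mu s] is_Vf_Vf[of mu, unfolded is_Vf_def, rule_format, of s] by linarith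

lemma performance_difference:
  assumes mu: "mu \<in> joint_policies A" and mu': "mu' \<in> joint_policies A"
  shows "J mu' - J mu =
    (\<Sum>s\<in>UNIV. stat mu' s * (\<Sum>a\<in>joint_actions A. jprob mu' s a * Af A P r \<beta> mu s a))"
proof -
  let ?V = "Vf A P r \<beta> mu"
  have stat': "is_stationary (Pmu A P mu') (stat mu')" by (rule stationary_stat[OF mu'])
  have "(\<Sum>s\<in>UNIV. stat mu' s * (\<Sum>t\<in>UNIV. Pmu A P mu' s t * ?V t)) = (\<Sum>t\<in>UNIV. stat mu' t * ?V t)"
    by (simp add: sum_mult_sum_swap left_fixedD[OF stationary_left_fixed[OF stat']])
  then show ?thesis
    by (simp add: expected_Af[OF mu mu'] J_eq_expected_f[of mu'] right_diff_distrib distrib_left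
        sum.distrib sum_subtractf stationary_sum[OF stat'] flip: sum_distrib_right)
qed

lemma jprob_fun_upd: "jprob (mu(i := p)) s a = p s (a i) * (\<Prod>j\<in>UNIV - {i}. mu j s (a j))"
proof -
  have "jprob (mu(i := p)) s a = p s (a i) * (\<Prod>j\<in>UNIV - {i}. (mu(i := p)) j s (a j))"
    unfolding jprob_def by (subst prod.remove[of _ i]) auto
  also have "(\<Prod>j\<in>UNIV - {i}. (mu(i := p)) j s (a j)) = (\<Prod>j\<in>UNIV - {i}. mu j s (a j))"
    by (rule prod.cong) auto
  finally show ?thesis .
qed

lemma sum_jprob_fun_upd:
  "(\<Sum>a\<in>joint_actions A. jprob (mu(i := p)) s a * X a) =
   (\<Sum>b\<in>A i. p s b * (\<Sum>a\<in>{a\<in>joint_actions A. a i = b}. (\<Prod>j\<in>UNIV - {i}. mu j s (a j)) * X a))"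
proof -
  have "(\<Sum>a\<in>joint_actions A. jprob (mu(i := p)) s a * X a) =
      (\<Sum>b\<in>A i. \<Sum>a\<in>{a\<in>joint_actions A. a i = b}. jprob (mu(i := p)) s a * X a)"
    by (rule sum.group[symmetric])
      (auto simp: finite_joint_actions[unfolded joint_actions_def] finite_actions joint_actions_def)
  also have "\<dots> = (\<Sum>b\<in>A i. p s b * (\<Sum>a\<in>{a\<in>joint_actions A. a i = b}. (\<Prod>j\<in>UNIV - {i}. mu j s (a j)) * X a))"
    unfolding sum_distrib_left by (intro sum.cong refl) (auto simp: jprob_fun_upd)
  finally show ?thesis .
qed

lemma fun_upd_joint_policies:
  "mu \<in> joint_policies A \<Longrightarrow> p \<in> policy_set A i \<Longrightarrow> mu(i := p) \<in> joint_policies A"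
  by (simp add: joint_policies_def)

lemma performance_difference_agent:
  assumes mu: "mu \<in> joint_policies A" and p: "p \<in> policy_set A i"
  shows "J (mu(i := p)) - J mu = (\<Sum>s\<in>UNIV. stat (mu(i := p)) s * (\<Sum>b\<in>A i. p s b * adv mu i s b))"
  unfolding performance_difference[OF mu fun_upd_joint_policies[OF mu p]] sum_jprob_fun_upd exp_adv_def ..

lemma expected_adv_self:
  assumes "mu \<in> joint_policies A"
  shows "(\<Sum>b\<in>A i. mu i s b * adv mu i s b) = 0"
  using expected_Af_self[OF assms, of s] sum_jprob_fun_upd[of mu i "mu i" s]
  by (simp add: exp_adv_def)

lemma det_pol_joint_policies: "(\<And>i s. d i s \<in> A i) \<Longrightarrow> det_pol d \<in> joint_policies A"
  by (auto simp: joint_policies_def policy_set_def det_pol_def finite_actions)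

lemma sum_det_pol: "d i s \<in> A i \<Longrightarrow> (\<Sum>b\<in>A i. det_pol d i s b * g b) = g (d i s)"
  by (simp add: det_pol_def if_distrib if_distribR finite_actions cong: if_cong)

lemma adv_det_pol_self: "(\<And>i s. d i s \<in> A i) \<Longrightarrow> adv (det_pol d) i s (d i s) = 0"
  using expected_adv_self[OF det_pol_joint_policies, of d i s] sum_det_pol[of d i s] by simp

lemma greedy_agent_update:
  assumes d: "\<And>j s. d j s \<in> A j" and c: "\<And>s. c s \<in> A i"
    and greedy: "\<And>s b. b \<in> A i \<Longrightarrow> adv (det_pol d) i s b \<le> adv (det_pol d) i s (c s)"
  shows "J (det_pol d) \<le> J (det_pol (d(i := c)))"
    and "adv (det_pol d) i s0 (d i s0) < adv (det_pol d) i s0 (c s0) \<Longrightarrow>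
      J (det_pol d) < J (det_pol (d(i := c)))"
proof -
  let ?g = "\<lambda>s. adv (det_pol d) i s (c s)"
  have mu: "det_pol d \<in> joint_policies A" using d by (rule det_pol_joint_policies)
  have mu': "det_pol (d(i := c)) \<in> joint_policies A" using d c by (intro det_pol_joint_policies) simp
  have p: "det_pol (d(i := c)) i \<in> policy_set A i" using mu' by (simp add: joint_policies_def)
  have upd: "(det_pol d)(i := det_pol (d(i := c)) i) = det_pol (d(i := c))"
    by (simp add: fun_eq_iff det_pol_def)
  have "J (det_pol (d(i := c))) - J (det_pol d) = (\<Sum>s\<in>UNIV. stat (det_pol (d(i := c))) s *
      (\<Sum>b\<in>A i. det_pol (d(i := c)) i s b * adv (det_pol d) i s b))"
    using performance_difference_agent[OF mu p] by (simp only: upd)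
  also have "\<dots> = (\<Sum>s\<in>UNIV. stat (det_pol (d(i := c))) s * ?g s)"
    by (intro sum.cong refl) (simp add: sum_det_pol[of "d(i := c)" i] c)
  finally have diff:
    "J (det_pol (d(i := c))) - J (det_pol d) = (\<Sum>s\<in>UNIV. stat (det_pol (d(i := c))) s * ?g s)" .
  have g_nonneg: "0 \<le> ?g s" for s
    using greedy[where b = "d i s" and s = s, OF d] adv_det_pol_self[of d, OF d] by simp
  have stat_pos': "0 < stat (det_pol (d(i := c))) s" for s
    by (rule stat_pos[OF mu'])
  have "0 \<le> (\<Sum>s\<in>UNIV. stat (det_pol (d(i := c))) s * ?g s)"
    by (intro sum_nonneg mult_nonneg_nonneg less_imp_le[OF stat_pos'] g_nonneg)
  with diff show "J (det_pol d) \<le> J (det_pol (d(i := c)))" by simp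
  assume "adv (det_pol d) i s0 (d i s0) < ?g s0"
  then have "0 < stat (det_pol (d(i := c))) s0 * ?g s0"
    using stat_pos' adv_det_pol_self[of d, OF d] by simp
  also have "\<dots> \<le> (\<Sum>s\<in>UNIV. stat (det_pol (d(i := c))) s * ?g s)"
    by (intro member_le_sum mult_nonneg_nonneg less_imp_le[OF stat_pos'] g_nonneg) simp_all
  finally show "J (det_pol d) < J (det_pol (d(i := c)))"
    using diff by simp
qed

lemma mapi_stepD:
  fixes s :: 's
  assumes "mapi_step A P r \<beta> perm d d'" and "h < length perm"
  defines "g \<equiv> adv (det_pol (sequential_update perm h d d')) (perm ! h) s"
  shows "d' (perm ! h) s \<in> A (perm ! h)"
    and "\<And>b. b \<in> A (perm ! h) \<Longrightarrow> g b \<le> g (d' (perm ! h) s)"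
    and "(\<forall>b\<in>A (perm ! h). g b \<le> g (d (perm ! h) s)) \<Longrightarrow> d' (perm ! h) s = d (perm ! h) s"
  using assms unfolding mapi_step_def sequential_update_def Let_def by blast+

lemma is_perm_nth: "is_perm perm \<Longrightarrow> \<exists>h<length perm. perm ! h = i"
  by (metis UNIV_I in_set_conv_nth is_perm_def)

lemma mapi_step_actions: "is_perm perm \<Longrightarrow> mapi_step A P r \<beta> perm d d' \<Longrightarrow> d' i s \<in> A i"
  by (metis is_perm_nth mapi_stepD(1))

lemma mapi_step_improves:
  assumes d: "\<And>i s. d i s \<in> A i" and perm: "is_perm perm" and step: "mapi_step A P r \<beta> perm d d'"
  shows "J (det_pol d) \<le> J (det_pol d')" and "d' \<noteq> d \<Longrightarrow> J (det_pol d) < J (det_pol d')"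
proof -
  let ?N = "length perm" and ?u = "\<lambda>h. sequential_update perm h d d'"
  define f where "f h = J (det_pol (?u h))" for h
  have distinct: "distinct perm" and set_perm: "set perm = UNIV" using perm by (auto simp: is_perm_def)
  have f_0: "f 0 = J (det_pol d)" and f_N: "f ?N = J (det_pol d')"
    by (simp_all add: f_def sequential_update_def set_perm)
  have u_actions: "?u h i s \<in> A i" for h i s
    using d mapi_step_actions[OF perm step] by (simp add: sequential_update_def)
  have agent_update: "J (det_pol (?u h)) \<le> J (det_pol (?u (Suc h)))"
    "adv (det_pol (?u h)) (perm ! h) s0 (d (perm ! h) s0)
        < adv (det_pol (?u h)) (perm ! h) s0 (d' (perm ! h) s0)
       \<Longrightarrow> J (det_pol (?u h)) < J (det_pol (?u (Suc h)))"
    if "h < ?N" for h s0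
    using greedy_agent_update[OF u_actions mapi_stepD(1)[OF step that] mapi_stepD(2)[OF step that]]
      sequential_update_nth[OF distinct that, of d d']
    by (simp_all add: sequential_update_Suc[OF that])
  have mono: "f h \<le> f (Suc h)" if "h \<in> {..<?N}" for h
    using agent_update(1) that by (simp add: f_def)
  have "f 0 \<le> f ?N" by (rule lift_Suc_mono_le_ivl[where N = "{..<?N}" and f = f, OF mono]) auto
  then show "J (det_pol d) \<le> J (det_pol d')" using f_0 f_N by simp
  assume "d' \<noteq> d"
  then obtain i s0 where changed: "d' i s0 \<noteq> d i s0" by (meson ext)
  obtain h where h: "h < ?N" "perm ! h = i" using is_perm_nth[OF perm] by blast
  let ?g = "adv (det_pol (?u h)) i s0"
  obtain b where "b \<in> A i" "?g (d i s0) < ?g b"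
    using mapi_stepD(3)[OF step h(1), of s0] changed h(2) by (meson not_le)
  then have "?g (d i s0) < ?g (d' i s0)"
    using mapi_stepD(2)[OF step h(1), of b s0] h(2) by simp
  then have "f h < f (Suc h)" using agent_update(2)[OF h(1)] h(2) by (simp add: f_def)
  moreover have "f 0 \<le> f h" "f (Suc h) \<le> f ?N"
    using h(1) by (auto intro: lift_Suc_mono_le_ivl[where N = "{..<?N}" and f = f, OF mono])
  ultimately show "J (det_pol d) < J (det_pol d')" using f_0 f_N by simp
qed

lemma mapi_step_fixed_point_nash:
  assumes d: "\<And>i s. d i s \<in> A i" and perm: "is_perm perm" and step: "mapi_step A P r \<beta> perm d d"
  shows "is_nash A P r \<beta> (det_pol d)"
  unfolding is_nash_def
proof (intro allI ballI)
  fix i and p :: "'s \<Rightarrow> 'a \<Rightarrow> real" assume p: "p \<in> policy_set A i"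
  have mu: "det_pol d \<in> joint_policies A" using d by (rule det_pol_joint_policies)
  obtain h where h: "h < length perm" "perm ! h = i" using is_perm_nth[OF perm] by blast
  have "adv (det_pol d) i s b \<le> 0" if "b \<in> A i" for s b
    using mapi_stepD(2)[OF step h(1), of b s] adv_det_pol_self[of d, OF d] that h(2)
    by (simp add: sequential_update_def)
  moreover have "0 \<le> p s b" for s b using p by (simp add: policy_set_def)
  ultimately have
    "(\<Sum>s\<in>UNIV. stat ((det_pol d)(i := p)) s * (\<Sum>b\<in>A i. p s b * adv (det_pol d) i s b)) \<le> 0"
    using stat_pos[OF fun_upd_joint_policies[OF mu p]]
    by (intro sum_nonpos mult_nonneg_nonpos) (auto intro: less_imp_le)
  then show "J ((det_pol d)(i := p)) \<le> J (det_pol d)"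
    using performance_difference_agent[OF mu p] by simp
qed

end

theorem corollary2:
  fixes A :: "'i::finite \<Rightarrow> 'a set"
    and P :: "'s::finite \<Rightarrow> ('i \<Rightarrow> 'a) \<Rightarrow> 's \<Rightarrow> real"
    and r :: "'s \<Rightarrow> ('i \<Rightarrow> 'a) \<Rightarrow> real"
    and \<beta> :: real
    and perms :: "nat \<Rightarrow> 'i list"
    and d :: "nat \<Rightarrow> 'i \<Rightarrow> 's \<Rightarrow> 'a"
  assumes A_fin: "\<And>i. finite (A i)"
    and A_ne: "\<And>i. A i \<noteq> {}"
    and P_nonneg: "\<And>s a s'. a \<in> joint_actions A \<Longrightarrow> 0 \<le> P s a s'"
    and P_sum: "\<And>s a. a \<in> joint_actions A \<Longrightarrow> (\<Sum>s'\<in>UNIV. P s a s') = 1"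
    and beta: "0 \<le> \<beta>"
    and erg: "\<And>mu. mu \<in> joint_policies A \<Longrightarrow> ergodic (Pmu A P mu)"
    and eta_const: "\<And>mu mu'. mu \<in> joint_policies A \<Longrightarrow> mu' \<in> joint_policies A \<Longrightarrow>
                      eta A P r mu = eta A P r mu'"
    and perms: "\<And>k. is_perm (perms k)"
    and init: "\<And>i s. d 0 i s \<in> A i"
    and run: "\<And>k. mapi_step A P r \<beta> (perms k) (d k) (d (Suc k))"
  shows "(\<exists>k. d (Suc k) = d k) \<and>
         (\<forall>k. d (Suc k) = d k \<longrightarrow> is_nash A P r \<beta> (det_pol (d k)))"
proof -
  interpret mv_team_game A P r \<beta>
    using A_fin P_nonneg P_sum erg eta_const by unfold_locales
  have d: "d k i s \<in> A i" for k i s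
    using init mapi_step_actions[OF perms run] by (cases k) auto
  have "finite (range d)"
    using d by (auto intro: finite_subset[OF _ finite_deterministic_policies])
  then have "\<exists>k. d (Suc k) = d k"
    using mapi_step_improves(2)[OF d perms run]
    by (rule ex_fixed_step_if_strictly_improving[where f = "\<lambda>x. J (det_pol x)"])
  moreover have "is_nash A P r \<beta> (det_pol (d k))" if "d (Suc k) = d k" for k
    using mapi_step_fixed_point_nash[OF d perms] run[of k] that by simp
  ultimately show ?thesis by blast
qed

end
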